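(* Let $n\ge 1$ be an integer, $a_0,\dots,a_n$ real constants, $p\in\{1,2,3,4\}$, and let $A^{j+k}_p,B^{j+k}_p$ ($|k|\le p$), $\mathcal{A}(\Lambda)$, $\mathcal{B}(\Lambda)$ and $C_{p+2}$ be as defined in the context (computed with the optimally blended quadrature rule). Fix a frequency $\omega>0$ and, for a mesh size $h>0$, let $\tilde\lambda^h$ be the approximate eigenvalue associated with the Bloch wave $U^j=e^{ij\omega h}$ in the mixed isogeometric discretization of $\mathcal{L}=\sum_{m=0}^n a_m(-\Delta)^m$, i.e. the number satisfying $$\Big(\sum_{m=1}^n a_m\,\omega^{2m-2}\Big)\mathcal{A}(\omega h)=(\tilde\lambda^h-a_0)\,\mathcal{B}(\omega h)\,h^2 .$$ Then, as $h\to 0$, $$\tilde\lambda^h-\sum_{k=0}^n a_k\,\omega^{2k}=\Big(C_{p+2}\sum_{k=1}^n a_k\,\omega^{2k}\Big)(\omega h)^{2p+2}+\mathcal{O}(h^{2p+4}).$$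
   Context: Setting: the $2n$-order eigenvalue problem $\mathcal{L}u=\lambda u$ with $\mathcal{L}=\sum_{m=0}^n a_m(-\Delta)^m$ is written in mixed form with auxiliary fields $\psi^0=u$, $\psi^m=-\Delta\psi^{m-1}$ ($m=1,\dots,n-1$), and discretized with $C^{p-1}$ B-splines of degree $p$ on a uniform 1D mesh of size $h$; with the Bloch ansatz $\Psi^{m,j}=\omega^{2m}e^{ij\omega h}$ for the coefficients of $\psi^m_h$ and elimination of the auxiliary fields, one obtains the defining relation for $\tilde\lambda^h$ given in the claim. B-splines: on knots $x_j=jh$, $\theta^j_0=1$ on $[x_j,x_{j+1})$ and $0$ otherwise, $\theta^j_p(x)=\frac{x-x_j}{x_{j+p}-x_j}\theta^j_{p-1}(x)+\frac{x_{j+p+1}-x}{x_{j+p+1}-x_{j+1}}\theta^{j+1}_{p-1}(x)$. Discrete forms: $a_h(w,v)=\sum_K\sum_l\varpi_{l,K}w'(n_{l,K})v'(n_{l,K})$, $b_h(w,v)=\sum_K\sum_l\varpi_{l,K}w(n_{l,K})v(n_{l,K})$, using elementwise the optimally blended rule $\tau_pG_{p+1}+(1-\tau_p)L_{p+1}$ ($G_l$: $l$-point Gauss–Legendre, $L_l$: $l$-point Gauss–Lobatto), with $\tau_1=\tfrac12,\tau_2=\tfrac13,\tau_3=-\tfrac32,\tau_4=-\tfrac{79}{5}$. For an interior index $j$: $A^{j+k}_p=h\,a_h(\theta^{j+k}_p,\theta^j_p)$, $B^{j+k}_p=\frac1h b_h(\theta^{j+k}_p,\theta^j_p)$ ($|k|\le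 p$), independent of $h$ and $j$; $\mathcal{A}(\Lambda)=A^j_p+2\sum_{k=1}^pA^{j+k}_p\cos(k\Lambda)$, $\mathcal{B}(\Lambda)=B^j_p+2\sum_{k=1}^pB^{j+k}_p\cos(k\Lambda)$; $C_{p+2}=2(-1)^p\sum_{k=1}^p\big(\frac{k^{2p+4}}{(2p+4)!}A^{j+k}_p+\frac{k^{2p+2}}{(2p+2)!}B^{j+k}_p\big)$. The quantity $\sum_{k=0}^n a_k\omega^{2k}$ is the exact eigenvalue of $\mathcal{L}$ for frequency $\omega$ (e.g. $\omega=j\pi$ on $[0,1]$). *)

theory Defs
  imports "HOL-Analysis.Analysis" "HOL-Library.Landau_Symbols"
begin

definition knot :: "real \<Rightarrow> int \<Rightarrow> real" where
  "knot h j = real_of_int j * h"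

fun bspline :: "real \<Rightarrow> nat \<Rightarrow> int \<Rightarrow> real \<Rightarrow> real" where
  "bspline h 0 j x = (if knot h j \<le> x \<and> x < knot h (j + 1) then 1 else 0)"
| "bspline h (Suc q) j x =
     (x - knot h j) / (knot h (j + int (Suc q)) - knot h j) * bspline h q j x
   + (knot h (j + int (Suc q) + 1) - x) / (knot h (j + int (Suc q) + 1) - knot h (j + 1))
       * bspline h q (j + 1) x"

definition gauss_rule :: "nat \<Rightarrow> (real \<times> real) list" where
  "gauss_rule l =
    (if l = 2 then [(- 1 / sqrt 3, 1), (1 / sqrt 3, 1)]
     else if l = 3 then [(- sqrt (3/5), 5/9), (0, 8/9), (sqrt (3/5), 5/9)]
     else if l = 4 then
       [(- sqrt (3/7 + 2/7 * sqrt (6/5)), (18 - sqrt 30) / 36),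
        (- sqrt (3/7 - 2/7 * sqrt (6/5)), (18 + sqrt 30) / 36),
        (sqrt (3/7 - 2/7 * sqrt (6/5)), (18 + sqrt 30) / 36),
        (sqrt (3/7 + 2/7 * sqrt (6/5)), (18 - sqrt 30) / 36)]
     else if l = 5 then
       [(- (1/3) * sqrt (5 + 2 * sqrt (10/7)), (322 - 13 * sqrt 70) / 900),
        (- (1/3) * sqrt (5 - 2 * sqrt (10/7)), (322 + 13 * sqrt 70) / 900),
        (0, 128/225),
        ((1/3) * sqrt (5 - 2 * sqrt (10/7)), (322 + 13 * sqrt 70) / 900),
        ((1/3) * sqrt (5 + 2 * sqrt (10/7)), (322 - 13 * sqrt 70) / 900)]
     else [])"

definition lobatto_rule :: "nat \<Rightarrow> (real \<times> real) list" where
  "lobatto_rule l =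
    (if l = 2 then [(- 1, 1), (1, 1)]
     else if l = 3 then [(- 1, 1/3), (0, 4/3), (1, 1/3)]
     else if l = 4 then [(- 1, 1/6), (- 1 / sqrt 5, 5/6), (1 / sqrt 5, 5/6), (1, 1/6)]
     else if l = 5 then
       [(- 1, 1/10), (- sqrt (3/7), 49/90), (0, 32/45), (sqrt (3/7), 49/90), (1, 1/10)]
     else [])"

definition blend_tau :: "nat \<Rightarrow> real" where
  "blend_tau p = (if p = 1 then 1/2 else if p = 2 then 1/3 else if p = 3 then - 3/2
                  else if p = 4 then - 79/5 else 0)"

definition blended_rule :: "nat \<Rightarrow> (real \<times> real) list" where
  "blended_rule p =
     map (\<lambda>(\<xi>, w). (\<xi>, blend_tau p * w)) (gauss_rule (p + 1))
   @ map (\<lambda>(\<xi>, w). (\<xi>, (1 - blend_tau p) * w)) (lobatto_rule (p + 1))"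

definition elem_node :: "real \<Rightarrow> int \<Rightarrow> real \<Rightarrow> real" where
  "elem_node h i \<xi> = knot h i + h * (1 + \<xi>) / 2"

definition elem_deriv :: "real \<Rightarrow> int \<Rightarrow> (real \<Rightarrow> real) \<Rightarrow> real \<Rightarrow> real" where
  "elem_deriv h i w x = vector_derivative w (at x within {knot h i .. knot h (i + 1)})"

definition a_h :: "nat \<Rightarrow> real \<Rightarrow> (real \<Rightarrow> real) \<Rightarrow> (real \<Rightarrow> real) \<Rightarrow> real" where
  "a_h p h w v = (\<Sum>\<^sub>\<infinity> i :: int.
     sum_list (map (\<lambda>(\<xi>, wt). (h * wt / 2)
        * elem_deriv h i w (elem_node h i \<xi>) * elem_deriv h i v (elem_node h i \<xi>))
        (blended_rule p)))"

definition b_h :: "nat \<Rightarrow> real \<Rightarrow> (real \<Rightarrow> real) \<Rightarrow> (real \<Rightarrow> real) \<Rightarrow> real" where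
  "b_h p h w v = (\<Sum>\<^sub>\<infinity> i :: int.
     sum_list (map (\<lambda>(\<xi>, wt). (h * wt / 2)
        * w (elem_node h i \<xi>) * v (elem_node h i \<xi>))
        (blended_rule p)))"

section \<open>Stencil coefficients (computed at h = 1, j = 0; they are independent of h and j)\<close>

definition stiffA :: "nat \<Rightarrow> int \<Rightarrow> real" where
  "stiffA p k = 1 * a_h p 1 (bspline 1 p k) (bspline 1 p 0)"

definition massB :: "nat \<Rightarrow> int \<Rightarrow> real" where
  "massB p k = (1 / 1) * b_h p 1 (bspline 1 p k) (bspline 1 p 0)"

definition calA :: "nat \<Rightarrow> real \<Rightarrow> real" where
  "calA p \<Lambda> = stiffA p 0 + 2 * (\<Sum>k = 1..p. stiffA p (int k) * cos (real k * \<Lambda>))"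

definition calB :: "nat \<Rightarrow> real \<Rightarrow> real" where
  "calB p \<Lambda> = massB p 0 + 2 * (\<Sum>k = 1..p. massB p (int k) * cos (real k * \<Lambda>))"

definition Cconst :: "nat \<Rightarrow> real" where
  "Cconst p = 2 * (- 1) ^ p * (\<Sum>k = 1..p.
      real k ^ (2 * p + 4) / fact (2 * p + 4) * stiffA p (int k)
    + real k ^ (2 * p + 2) / fact (2 * p + 2) * massB p (int k))"

end

theory Submission
  imports Defs "HOL-Computational_Algebra.Polynomial" "HOL-Real_Asymp.Real_Asymp"
begin

text \<open>
  On the unit mesh each B-spline is a polynomial on every element (Cox--de Boor recursion),
  and a quadrature rule applied to a polynomial only sees the moments of the rule.  Hence the
  stencil coefficients are explicit rationals and \<open>calA p\<close>, \<open>calB p\<close> are explicit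
  trigonometric polynomials.  Solving the defining relation for the eigenvalue gives
  \<open>\<lambda>\<^sup>h - a\<^sub>0 = (\<Sum>m\<ge>1. a\<^sub>m \<omega>\<^sup>2\<^sup>m) calA(\<omega>h) / ((\<omega>h)\<^sup>2 calB(\<omega>h))\<close>,
  so the error expansion follows from the dispersion expansion
  \<open>calA(x) / (x\<^sup>2 calB(x)) = 1 + C\<^sub>p\<^sub>+\<^sub>2 x\<^sup>2\<^sup>p\<^sup>+\<^sup>2 + O(x\<^sup>2\<^sup>p\<^sup>+\<^sup>4)\<close>,
  a Taylor expansion that is checked for each \<open>p \<le> 4\<close>.
\<close>

section \<open>B-splines on the unit mesh as piecewise polynomials\<close>

text \<open>\<open>bspline_piece q r\<close> is the degree-\<open>q\<close> B-spline on the \<open>r\<close>-th element of its support,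
  in the local coordinate \<open>t \<in> [0,1]\<close> of that element.\<close>

fun bspline_piece :: "nat \<Rightarrow> int \<Rightarrow> real poly" where
  "bspline_piece 0 r = (if r = 0 then 1 else 0)"
| "bspline_piece (Suc q) r = smult (1 / real (Suc q))
     ([:of_int r, 1:] * bspline_piece q r + [:real q + 2 - of_int r, -1:] * bspline_piece q (r - 1))"

lemma bspline_eq_piece:
  assumes "real_of_int i \<le> x" "x < real_of_int i + 1"
  shows "bspline 1 q j x = poly (bspline_piece q (i - j)) (x - real_of_int i)"
  using assms
proof (induction q arbitrary: j)
  case 0
  have "real_of_int j \<le> x \<and> x < real_of_int j + 1 \<longleftrightarrow> i = j"
  proof
    assume "real_of_int j \<le> x \<and> x < real_of_int j + 1"
    then have "j < i + 1" "i < j + 1" using 0 by linarith+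
    then show "i = j" by linarith
  qed (use 0 in auto)
  then show ?case by (auto simp: knot_def)
next
  case (Suc q)
  have IH: "bspline 1 q j x = poly (bspline_piece q (i - j)) (x - real_of_int i)"
    "bspline 1 q (j + 1) x = poly (bspline_piece q (i - j - 1)) (x - real_of_int i)"
    using Suc.IH[of j] Suc.IH[of "j + 1"] Suc.prems by (simp_all add: algebra_simps)
  have "knot 1 (j + int (Suc q)) - knot 1 j = real (Suc q)"
    "knot 1 (j + int (Suc q) + 1) - knot 1 (j + 1) = real (Suc q)"
    by (simp_all add: knot_def)
  then show ?case
    by (simp only: bspline.simps IH bspline_piece.simps poly_smult poly_add poly_mult poly_pCons
        poly_0) (simp add: knot_def divide_simps)
qed

lemma bspline_piece_outside: "r < 0 \<or> int q < r \<Longrightarrow> bspline_piece q r = 0"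
  by (induction q arbitrary: r) auto

lemma bspline_piece_continuous:
  "poly (bspline_piece (Suc q) r) 1 = poly (bspline_piece (Suc q) (r + 1)) 0"
proof (induction q arbitrary: r)
  case 0
  show ?case by (simp add: algebra_simps)
next
  case (Suc q)
  have "poly (bspline_piece (Suc q) (r - 1)) 1 = poly (bspline_piece (Suc q) r) 0"
    using Suc.IH[of "r - 1"] by simp
  with Suc.IH[of r] show ?case
    by (simp only: bspline_piece.simps(2)[of "Suc q"] poly_smult poly_add poly_mult poly_pCons
        poly_0) (simp add: algebra_simps)
qed

text \<open>For positive degree the B-splines are continuous, so the piece also describes the
  spline at the right end point of the element.\<close>

lemma bspline_eq_piece_closed:
  assumes "1 \<le> q" "0 \<le> t" "t \<le> 1"
  shows "bspline 1 q j (real_of_int i + t) = poly (bspline_piece q (i - j)) t"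
proof (cases "t < 1")
  case True
  then show ?thesis using bspline_eq_piece[of i "real_of_int i + t" q j] assms by simp
next
  case False
  obtain q' where q: "q = Suc q'" using assms by (cases q) auto
  have "bspline 1 q j (real_of_int (i + 1) + 0) = poly (bspline_piece q (i + 1 - j)) 0"
    using bspline_eq_piece[of "i + 1" "real_of_int (i + 1) + 0" q j] by simp
  moreover have "poly (bspline_piece q (i - j)) 1 = poly (bspline_piece q (i - j + 1)) 0"
    unfolding q by (rule bspline_piece_continuous)
  ultimately show ?thesis using False assms by (simp add: algebra_simps)
qed

lemma elem_deriv_bspline:
  assumes "1 \<le> q" "0 \<le> t" "t \<le> 1"
  shows "elem_deriv 1 i (bspline 1 q j) (real_of_int i + t)
           = poly (pderiv (bspline_piece q (i - j))) t"
proof -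
  define P where "P = bspline_piece q (i - j)"
  define S where "S = {real_of_int i .. real_of_int i + 1}"
  have x: "real_of_int i + t \<in> S" using assms by (simp add: S_def)
  have "((\<lambda>y. y - real_of_int i) has_real_derivative 1) (at (real_of_int i + t))"
    by (auto intro!: derivative_eq_intros)
  from DERIV_chain2[OF poly_DERIV this]
  have "((\<lambda>y. poly P (y - real_of_int i)) has_real_derivative poly (pderiv P) t)
          (at (real_of_int i + t))"
    by simp
  then have "((\<lambda>y. poly P (y - real_of_int i)) has_vector_derivative poly (pderiv P) t)
               (at (real_of_int i + t) within S)"
    by (simp add: has_real_derivative_iff_has_vector_derivative has_vector_derivative_at_within)
  then have "(bspline 1 q j has_vector_derivative poly (pderiv P) t) (at (real_of_int i + t) within S)"
  proof (rule has_vector_derivative_weaken[OF _ x order_refl])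
    fix y assume "y \<in> S"
    then have "0 \<le> y - real_of_int i" "y - real_of_int i \<le> 1" by (auto simp: S_def)
    from bspline_eq_piece_closed[OF assms(1) this, of j i]
    show "poly P (y - real_of_int i) = bspline 1 q j y" by (simp add: P_def)
  qed
  then have "vector_derivative (bspline 1 q j) (at (real_of_int i + t) within S) = poly (pderiv P) t"
    unfolding S_def
    by (rule vector_derivative_within_closed_interval[rotated 2]) (use x in \<open>auto simp: S_def\<close>)
  then show ?thesis by (simp add: elem_deriv_def S_def P_def knot_def)
qed

section \<open>Stencil coefficients as finite sums of quadratures\<close>

definition quad01 :: "(real \<times> real) list \<Rightarrow> real poly \<Rightarrow> real" where
  "quad01 R P = sum_list (map (\<lambda>(\<xi>, w). w / 2 * poly P ((1 + \<xi>) / 2)) R)"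

definition nodes_in_ref :: "(real \<times> real) list \<Rightarrow> bool" where
  "nodes_in_ref R \<longleftrightarrow> (\<forall>z\<in>set R. \<bar>fst z\<bar> \<le> 1)"

lemma quad01_0 [simp]: "quad01 R 0 = 0"
  by (induction R) (auto simp: quad01_def)

lemma elem_node_unit: "elem_node 1 i \<xi> = real_of_int i + (1 + \<xi>) / 2"
  by (simp add: elem_node_def knot_def)

lemma quad01_cong_nodes:
  assumes "nodes_in_ref R"
    and "\<And>t. 0 \<le> t \<Longrightarrow> t \<le> 1 \<Longrightarrow> f (real_of_int i + t) * g (real_of_int i + t) = poly P t"
  shows "sum_list (map (\<lambda>(\<xi>, wt). 1 * wt / 2 * f (elem_node 1 i \<xi>) * g (elem_node 1 i \<xi>)) R)
         = quad01 R P"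
  unfolding quad01_def
proof (rule arg_cong[where f = sum_list], rule map_cong[OF refl], clarify)
  fix \<xi> wt assume "(\<xi>, wt) \<in> set R"
  then have "0 \<le> (1 + \<xi>) / 2" "(1 + \<xi>) / 2 \<le> 1"
    using assms(1) by (auto simp: nodes_in_ref_def abs_le_iff)
  then show "1 * wt / 2 * f (elem_node 1 i \<xi>) * g (elem_node 1 i \<xi>)
      = wt / 2 * poly P ((1 + \<xi>) / 2)"
    by (simp add: elem_node_unit assms(2) flip: mult.assoc)
qed

lemma infsum_int_supported:
  fixes f :: "int \<Rightarrow> 'a :: {topological_comm_monoid_add, t2_space}"
  assumes "\<And>i. i < 0 \<or> int q < i \<Longrightarrow> f i = 0"
  shows "(\<Sum>\<^sub>\<infinity> i. f i) = (\<Sum>i<Suc q. f (int i))"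
proof -
  have "(\<Sum>\<^sub>\<infinity> i. f i) = (\<Sum>\<^sub>\<infinity> i\<in>{0..int q}. f i)"
    by (rule infsum_cong_neutral) (use assms in auto)
  also have "\<dots> = (\<Sum>i\<in>int ` {..q}. f i)"
    by (simp add: image_int_atLeastAtMost atLeast0AtMost[symmetric])
  also have "\<dots> = (\<Sum>i<Suc q. f (int i))"
    by (simp add: sum.reindex lessThan_Suc_atMost)
  finally show ?thesis .
qed

lemma stiffA_eq_sum:
  assumes "1 \<le> q" "nodes_in_ref (blended_rule q)"
  shows "stiffA q k = (\<Sum>i<Suc q. quad01 (blended_rule q)
           (pderiv (bspline_piece q (int i - k)) * pderiv (bspline_piece q (int i))))"
proof -
  have "stiffA q k = (\<Sum>\<^sub>\<infinity> i. quad01 (blended_rule q)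
          (pderiv (bspline_piece q (i - k)) * pderiv (bspline_piece q i)))"
    unfolding stiffA_def a_h_def
    by (subst mult_1_left, intro infsum_cong quad01_cong_nodes assms(2))
       (simp add: elem_deriv_bspline[OF assms(1)])
  also have "\<dots> = (\<Sum>i<Suc q. quad01 (blended_rule q)
           (pderiv (bspline_piece q (int i - k)) * pderiv (bspline_piece q (int i))))"
    by (rule infsum_int_supported) (simp add: bspline_piece_outside)
  finally show ?thesis .
qed

lemma massB_eq_sum:
  assumes "1 \<le> q" "nodes_in_ref (blended_rule q)"
  shows "massB q k = (\<Sum>i<Suc q. quad01 (blended_rule q)
           (bspline_piece q (int i - k) * bspline_piece q (int i)))"
proof -
  have "massB q k = (\<Sum>\<^sub>\<infinity> i. quad01 (blended_rule q)
          (bspline_piece q (i - k) * bspline_piece q i))"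
    unfolding massB_def b_h_def
    by (subst divide_self, simp, subst mult_1_left, intro infsum_cong quad01_cong_nodes assms(2))
       (simp add: bspline_eq_piece_closed[OF assms(1)])
  also have "\<dots> = (\<Sum>i<Suc q. quad01 (blended_rule q)
           (bspline_piece q (int i - k) * bspline_piece q (int i)))"
    by (rule infsum_int_supported) (simp add: bspline_piece_outside)
  finally show ?thesis .
qed

section \<open>Quadrature of polynomials through moments\<close>

definition moment :: "(real \<times> real) list \<Rightarrow> nat \<Rightarrow> real" where
  "moment R m = sum_list (map (\<lambda>(\<xi>, w). w * \<xi> ^ m) R)"

definition quad_xpow :: "(real \<times> real) list \<Rightarrow> nat \<Rightarrow> real poly \<Rightarrow> real" where
  "quad_xpow R m P = sum_list (map (\<lambda>(\<xi>, w). w / 2 * \<xi> ^ m * poly P \<xi>) R)"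

lemma quad01_eq_quad_xpow: "quad01 R P = quad_xpow R 0 (P \<circ>\<^sub>p [:1/2, 1/2:])"
  unfolding quad01_def quad_xpow_def by (simp add: poly_pcompose add_divide_distrib)

lemma quad_xpow_0: "quad_xpow R m 0 = 0"
  unfolding quad_xpow_def by (induction R) auto

lemma quad_xpow_pCons: "quad_xpow R m (pCons a P) = a * moment R m / 2 + quad_xpow R (m + 1) P"
proof -
  have "(\<lambda>(\<xi>, w). w / 2 * \<xi> ^ m * poly (pCons a P) \<xi>)
     = (\<lambda>z. a / 2 * (case z of (\<xi>, w) \<Rightarrow> w * \<xi> ^ m)
             + (case z of (\<xi>, w) \<Rightarrow> w / 2 * \<xi> ^ (m + 1) * poly P \<xi>))"
    by (simp add: case_prod_unfold fun_eq_iff algebra_simps)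
  then show ?thesis
    unfolding quad_xpow_def moment_def by (simp only: sum_list_addf sum_list_const_mult)
qed

lemma quad_xpow_1: "quad_xpow R m 1 = moment R m / 2"
  unfolding quad_xpow_def moment_def by (induction R) (auto simp: algebra_simps)

lemma quad_xpow_add: "quad_xpow R m (P + Q) = quad_xpow R m P + quad_xpow R m Q"
  unfolding quad_xpow_def by (induction R) (auto simp: algebra_simps)

lemma quad_xpow_uminus: "quad_xpow R m (- P) = - quad_xpow R m P"
  unfolding quad_xpow_def by (induction R) (auto simp: algebra_simps)

lemma quad_xpow_diff: "quad_xpow R m (P - Q) = quad_xpow R m P - quad_xpow R m Q"
  using quad_xpow_add[of R m P "- Q"] quad_xpow_uminus[of R m Q] by simp

lemma quad_xpow_smult: "quad_xpow R m (smult c P) = c * quad_xpow R m P"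
  unfolding quad_xpow_def by (induction R) (auto simp: algebra_simps)

lemma moment_scale_weights:
  "moment (map (\<lambda>(\<xi>, w). (\<xi>, c * w)) R) m = c * moment R m"
  unfolding moment_def by (induction R) (auto simp: algebra_simps)

lemma moment_blended_rule:
  "moment (blended_rule p) m
     = blend_tau p * moment (gauss_rule (p + 1)) m
       + (1 - blend_tau p) * moment (lobatto_rule (p + 1)) m"
  using moment_scale_weights unfolding blended_rule_def by (simp add: moment_def)

lemma sqrt_power_even_numeral: "sqrt y ^ numeral (Num.Bit0 k) = \<bar>y\<bar> ^ numeral k"
proof -
  have "sqrt y ^ numeral (Num.Bit0 k) = (sqrt y * sqrt y) ^ numeral k"
    by (simp only: power_numeral_even Let_def power_mult_distrib)
  then show ?thesis by simp
qed

lemma sqrt_power_odd_numeral: "sqrt y ^ numeral (Num.Bit1 k) = sqrt y * \<bar>y\<bar> ^ numeral k"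
proof -
  have "sqrt y ^ numeral (Num.Bit1 k) = sqrt y * (sqrt y * sqrt y) ^ numeral k"
    by (simp only: power_numeral_odd Let_def mult.assoc power_mult_distrib)
  then show ?thesis by simp
qed

lemma sqrt_mult_sqrt_left: "sqrt a * (sqrt a * x) = \<bar>a\<bar> * x"
  by (simp add: mult.assoc[symmetric])

lemma sqrt_70: "sqrt 70 = 7 * sqrt (10/7)"
  using real_sqrt_mult[of 49 "10/7"] by simp

lemma sqrt_30: "sqrt 30 = 5 * sqrt (6/5)"
  using real_sqrt_mult[of 25 "6/5"] by simp

lemma sqrt_10_7_le: "sqrt (10/7) \<le> (2::real)"
  by (rule real_le_lsqrt) simp_all

lemma sqrt_6_5_le: "sqrt (6/5) \<le> (3/2::real)"
  by (rule real_le_lsqrt) (simp_all add: power2_eq_square)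

lemma abs_gauss_5_node_squares:
  "\<bar>5 + 2 * sqrt (10/7)\<bar> = 5 + 2 * sqrt (10/7::real)"
  "\<bar>5 - 2 * sqrt (10/7)\<bar> = 5 - 2 * sqrt (10/7::real)"
  using sqrt_10_7_le by (auto intro!: abs_of_nonneg)

lemma abs_gauss_4_node_squares:
  "\<bar>3/7 + 2/7 * sqrt (6/5)\<bar> = 3/7 + 2/7 * sqrt (6/5::real)"
  "\<bar>3/7 - 2/7 * sqrt (6/5)\<bar> = 3/7 - 2/7 * sqrt (6/5::real)"
  "\<bar>3/7 - 2 * sqrt (6/5) / 7\<bar> = 3/7 - 2 * sqrt (6/5) / (7::real)"
  using sqrt_6_5_le by (auto intro!: abs_of_nonneg)

text \<open>Even powers of the nodes and, via \<open>sqrt_30\<close> and \<open>sqrt_70\<close>, the weights become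
  polynomials in \<open>sqrt (6/5)\<close> and \<open>sqrt (10/7)\<close>, in which the surds cancel.\<close>

lemmas moment_rule_simps = moment_def gauss_rule_def lobatto_rule_def
  sqrt_power_even_numeral sqrt_power_odd_numeral power_minus_Bit0 power_minus_Bit1
  power_mult_distrib power_divide sqrt_70 sqrt_30 abs_gauss_5_node_squares abs_gauss_4_node_squares

lemmas moment_arith_simps = power_numeral_reduce algebra_simps sqrt_mult_sqrt_left

lemma moments_gauss_2:
  "moment (gauss_rule 2) 0 = 2" "moment (gauss_rule 2) 1 = 0" "moment (gauss_rule 2) 2 = 2/3"
  by (simp add: moment_rule_simps; (simp add: moment_arith_simps)?; (simp add: field_simps)?)+

lemma moments_lobatto_2:
  "moment (lobatto_rule 2) 0 = 2" "moment (lobatto_rule 2) 1 = 0" "moment (lobatto_rule 2) 2 = 2"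
  by (simp add: moment_rule_simps; (simp add: moment_arith_simps)?; (simp add: field_simps)?)+

lemma moments_gauss_3:
  "moment (gauss_rule 3) 0 = 2" "moment (gauss_rule 3) 1 = 0" "moment (gauss_rule 3) 2 = 2/3"
  "moment (gauss_rule 3) 3 = 0" "moment (gauss_rule 3) 4 = 2/5"
  by (simp add: moment_rule_simps; (simp add: moment_arith_simps)?; (simp add: field_simps)?)+

lemma moments_lobatto_3:
  "moment (lobatto_rule 3) 0 = 2" "moment (lobatto_rule 3) 1 = 0" "moment (lobatto_rule 3) 2 = 2/3"
  "moment (lobatto_rule 3) 3 = 0" "moment (lobatto_rule 3) 4 = 2/3"
  by (simp add: moment_rule_simps; (simp add: moment_arith_simps)?; (simp add: field_simps)?)+

lemma moments_gauss_4:
  "moment (gauss_rule 4) 0 = 2" "moment (gauss_rule 4) 1 = 0" "moment (gauss_rule 4) 2 = 2/3"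
  "moment (gauss_rule 4) 3 = 0" "moment (gauss_rule 4) 4 = 2/5" "moment (gauss_rule 4) 5 = 0"
  "moment (gauss_rule 4) 6 = 2/7"
  by (simp add: moment_rule_simps; (simp add: moment_arith_simps)?; (simp add: field_simps)?)+

lemma moments_lobatto_4:
  "moment (lobatto_rule 4) 0 = 2" "moment (lobatto_rule 4) 1 = 0" "moment (lobatto_rule 4) 2 = 2/3"
  "moment (lobatto_rule 4) 3 = 0" "moment (lobatto_rule 4) 4 = 2/5" "moment (lobatto_rule 4) 5 = 0"
  "moment (lobatto_rule 4) 6 = 26/75"
  by (simp add: moment_rule_simps; (simp add: moment_arith_simps)?; (simp add: field_simps)?)+

lemma moments_gauss_5:
  "moment (gauss_rule 5) 0 = 2" "moment (gauss_rule 5) 1 = 0" "moment (gauss_rule 5) 2 = 2/3"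
  "moment (gauss_rule 5) 3 = 0" "moment (gauss_rule 5) 4 = 2/5" "moment (gauss_rule 5) 5 = 0"
  "moment (gauss_rule 5) 6 = 2/7" "moment (gauss_rule 5) 7 = 0" "moment (gauss_rule 5) 8 = 2/9"
  by (simp add: moment_rule_simps; (simp add: moment_arith_simps)?; (simp add: field_simps)?)+

lemma moments_lobatto_5:
  "moment (lobatto_rule 5) 0 = 2" "moment (lobatto_rule 5) 1 = 0" "moment (lobatto_rule 5) 2 = 2/3"
  "moment (lobatto_rule 5) 3 = 0" "moment (lobatto_rule 5) 4 = 2/5" "moment (lobatto_rule 5) 5 = 0"
  "moment (lobatto_rule 5) 6 = 2/7" "moment (lobatto_rule 5) 7 = 0" "moment (lobatto_rule 5) 8 = 58/245"
  by (simp add: moment_rule_simps; (simp add: moment_arith_simps)?; (simp add: field_simps)?)+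

lemma nodes_in_ref_blended_rule:
  assumes "p \<in> {1,2,3,4}"
  shows "nodes_in_ref (blended_rule p)"
proof -
  have "0 \<le> 3/7 - 2 * sqrt (6/5) / (7::real)" "3/7 + 2 * sqrt (6/5) / 7 \<le> (1::real)"
    "3/7 - 2 * sqrt (6/5) / 7 \<le> (1::real)"
    "5 + 2 * sqrt (10/7) \<le> (3\<^sup>2::real)" "5 - 2 * sqrt (10/7) \<le> (3\<^sup>2::real)"
    using sqrt_6_5_le sqrt_10_7_le real_sqrt_ge_zero[of "10/7"] real_sqrt_ge_zero[of "6/5"]
    unfolding power2_eq_square
    by linarith+
  moreover have "sqrt (5 + 2 * sqrt (10/7)) \<le> (3::real)" "sqrt (5 - 2 * sqrt (10/7)) \<le> (3::real)"
    using calculation by (auto intro!: real_le_lsqrt)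
  ultimately show ?thesis
    using assms by (auto simp: nodes_in_ref_def blended_rule_def gauss_rule_def lobatto_rule_def)
qed

section \<open>The stencils for \<open>p = 1, \<dots>, 4\<close>\<close>

lemma bspline_piece_values:
  "bspline_piece 1 0 = [:0, 1:]" "bspline_piece 1 1 = [:1, -1:]"
  "bspline_piece 2 0 = [:0, 0, 1/2:]" "bspline_piece 2 1 = [:1/2, 1, -1:]"
  "bspline_piece 2 2 = [:1/2, -1, 1/2:]"
  "bspline_piece 3 0 = [:0, 0, 0, 1/6:]" "bspline_piece 3 1 = [:1/6, 1/2, 1/2, -1/2:]"
  "bspline_piece 3 2 = [:2/3, 0, -1, 1/2:]" "bspline_piece 3 3 = [:1/6, -1/2, 1/2, -1/6:]"
  "bspline_piece 4 0 = [:0, 0, 0, 0, 1/24:]" "bspline_piece 4 1 = [:1/24, 1/6, 1/4, 1/6, -1/6:]"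
  "bspline_piece 4 2 = [:11/24, 1/2, -1/4, -1/2, 1/4:]"
  "bspline_piece 4 3 = [:11/24, -1/2, -1/4, 1/2, -1/6:]"
  "bspline_piece 4 4 = [:1/24, -1/6, 1/4, -1/6, 1/24:]"
  by (simp_all add: eval_nat_numeral)

text \<open>The simplifier rewrites \<open>1 :: nat\<close> to \<open>Suc 0\<close> (\<open>One_nat_def\<close>) and \<open>Suc 0 + 1\<close> to
  \<open>Suc (Suc 0)\<close>, so the moment lemmas are supplied in that normal form.\<close>

lemmas stencil_simps =
  stiffA_eq_sum[OF _ nodes_in_ref_blended_rule] massB_eq_sum[OF _ nodes_in_ref_blended_rule]
  bspline_piece_values bspline_piece_outside lessThan_nat_numeral lessThan_Suc
  pderiv_pCons pderiv_add pderiv_minus pderiv_diff pderiv_smult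
  pcompose_pCons pcompose_1 pcompose_add pcompose_uminus pcompose_diff pcompose_smult ring_distribs
  quad01_eq_quad_xpow quad_xpow_0 quad_xpow_pCons quad_xpow_1 quad_xpow_add quad_xpow_uminus
  quad_xpow_diff quad_xpow_smult moment_blended_rule blend_tau_def numeral_2_eq_2[symmetric]
  moments_gauss_2[unfolded One_nat_def] moments_lobatto_2[unfolded One_nat_def]
  moments_gauss_3[unfolded One_nat_def] moments_lobatto_3[unfolded One_nat_def]
  moments_gauss_4[unfolded One_nat_def] moments_lobatto_4[unfolded One_nat_def]
  moments_gauss_5[unfolded One_nat_def] moments_lobatto_5[unfolded One_nat_def]

lemma stencil_1: "stiffA 1 0 = 2" "stiffA 1 1 = -1" "massB 1 0 = 5/6" "massB 1 1 = 1/12"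
  by (simp_all add: stencil_simps)

lemma stencil_2:
  "stiffA 2 0 = 1" "stiffA 2 1 = -1/3" "stiffA 2 2 = -1/6"
  "massB 2 0 = 67/120" "massB 2 1 = 19/90" "massB 2 2 = 7/720"
  by (simp_all add: stencil_simps)

lemma stencil_3:
  "stiffA 3 0 = 2/3" "stiffA 3 1 = -1/8" "stiffA 3 2 = -1/5" "stiffA 3 3 = -1/120"
  "massB 3 0 = 3629/7560" "massB 3 1 = 2377/10080" "massB 3 2 = 121/5040" "massB 3 3 = 1/6048"
  by (simp_all add: stencil_simps)

lemma stencil_4:
  "stiffA 4 0 = 35/72" "stiffA 4 1 = -11/360" "stiffA 4 2 = -17/90" "stiffA 4 3 = -59/2520"
  "stiffA 4 4 = -1/5040"
  "massB 4 0 = 156211/362880" "massB 4 1 = 220543/907200" "massB 4 2 = 36541/907200"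
  "massB 4 3 = 1249/907200" "massB 4 4 = 13/3628800"
  by (simp_all add: stencil_simps)

lemma atLeastAtMost_Suc_0_numeral:
  "{Suc 0..2} = {1, 2::nat}" "{Suc 0..3} = {1, 2, 3::nat}" "{Suc 0..4} = {1, 2, 3, 4::nat}"
  by auto

lemma symbols_1:
  "calA 1 x = 2 - 2 * cos x"
  "calB 1 x = 5/6 + 1/6 * cos x"
  "Cconst 1 = -1/240"
  by (simp_all add: calA_def calB_def Cconst_def stencil_1[unfolded One_nat_def] fact_numeral)

lemma symbols_2:
  "calA 2 x = 1 - 2/3 * cos x - 1/3 * cos (2 * x)"
  "calB 2 x = 67/120 + 19/45 * cos x + 7/360 * cos (2 * x)"
  "Cconst 2 = 11/60480"
  by (simp_all add: calA_def calB_def Cconst_def stencil_2 fact_numeral atLeastAtMost_Suc_0_numeral)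

lemma symbols_3:
  "calA 3 x = 2/3 - 1/4 * cos x - 2/5 * cos (2 * x) - 1/60 * cos (3 * x)"
  "calB 3 x = 3629/7560 + 2377/5040 * cos x + 121/2520 * cos (2 * x) + 1/3024 * cos (3 * x)"
  "Cconst 3 = 1/72576"
  by (simp_all add: calA_def calB_def Cconst_def stencil_3 fact_numeral atLeastAtMost_Suc_0_numeral)

lemma symbols_4:
  "calA 4 x = 35/72 - 11/180 * cos x - 17/45 * cos (2 * x) - 59/1260 * cos (3 * x)
     - 1/2520 * cos (4 * x)"
  "calB 4 x = 156211/362880 + 220543/453600 * cos x + 36541/453600 * cos (2 * x)
     + 1249/453600 * cos (3 * x) + 13/1814400 * cos (4 * x)"
  "Cconst 4 = 317/479001600"
  by (simp_all add: calA_def calB_def Cconst_def stencil_4 fact_numeral atLeastAtMost_Suc_0_numeral)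

section \<open>Dispersion of the discrete eigenvalue\<close>

lemma symbol_ratio_expansion:
  assumes "p \<in> {1,2,3,4}"
  shows "(\<lambda>x. calA p x / (x\<^sup>2 * calB p x) - 1 - Cconst p * x ^ (2 * p + 2))
           \<in> O[at_right 0](\<lambda>x. x ^ (2 * p + 4))"
proof -
  consider "p = 1" | "p = 2" | "p = 3" | "p = 4" using assms by auto
  then show ?thesis
  proof cases
    case 1 show ?thesis unfolding 1 symbols_1 by real_asymp
  next
    case 2 show ?thesis unfolding 2 symbols_2 by real_asymp
  next
    case 3 show ?thesis unfolding 3 symbols_3 by real_asymp
  next
    case 4 show ?thesis unfolding 4 symbols_4 by real_asymp
  qed
qed

lemma calB_eventually_nonzero:
  assumes "calB p 0 \<noteq> 0"
  shows "eventually (\<lambda>x. calB p x \<noteq> 0) (at_right 0)"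
proof -
  have "(calB p \<longlongrightarrow> calB p 0) (at_right 0)"
    unfolding calB_def by (intro tendsto_intros)
  then show ?thesis using assms by (rule tendsto_imp_eventually_ne)
qed

lemma calB_0: "p \<in> {1,2,3,4} \<Longrightarrow> calB p 0 = 1"
  by (auto simp: symbols_1[unfolded One_nat_def] symbols_2 symbols_3 symbols_4)

lemma eigenvalue_error_from_symbol_expansion:
  fixes cA cB lam :: "real \<Rightarrow> real" and C S a0 \<kappa> :: real and M N :: nat
  assumes expansion: "(\<lambda>x. cA x / (x\<^sup>2 * cB x) - 1 - C * x ^ M) \<in> O[at_right 0](\<lambda>x. x ^ N)"
    and nonzero: "eventually (\<lambda>x. cB x \<noteq> 0) (at_right 0)"
    and "\<kappa> > 0"
    and relation: "\<And>h. h > 0 \<Longrightarrow> S * cA (\<kappa> * h) = (lam h - a0) * cB (\<kappa> * h) * h\<^sup>2"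
  shows "(\<lambda>h. lam h - (a0 + \<kappa>\<^sup>2 * S) - C * (\<kappa>\<^sup>2 * S) * (\<kappa> * h) ^ M) \<in> O[at_right 0](\<lambda>h. h ^ N)"
proof -
  define g where "g x = cA x / (x\<^sup>2 * cB x) - 1 - C * x ^ M" for x
  have scale: "filterlim (\<lambda>h. \<kappa> * h) (at_right 0) (at_right 0)"
    using \<open>\<kappa> > 0\<close> by real_asymp
  have "(\<lambda>h. g (\<kappa> * h)) \<in> O[at_right 0](\<lambda>h. (\<kappa> * h) ^ N)"
    using landau_o.big.compose[OF expansion scale] unfolding g_def .
  also have "(\<lambda>h. (\<kappa> * h) ^ N) \<in> O[at_right 0](\<lambda>h. h ^ N)"
    by (simp add: power_mult_distrib)
  finally have "(\<lambda>h. \<kappa>\<^sup>2 * S * g (\<kappa> * h)) \<in> O[at_right 0](\<lambda>h. h ^ N)"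
    by (cases "\<kappa>\<^sup>2 * S = 0") simp_all
  moreover have "eventually (\<lambda>h. \<kappa>\<^sup>2 * S * g (\<kappa> * h)
      = lam h - (a0 + \<kappa>\<^sup>2 * S) - C * (\<kappa>\<^sup>2 * S) * (\<kappa> * h) ^ M) (at_right 0)"
    using eventually_conj[OF eventually_at_right_less[of 0] eventually_compose_filterlim[OF nonzero scale]]
  proof (rule eventually_mono)
    fix h assume h: "0 < h \<and> cB (\<kappa> * h) \<noteq> 0"
    with relation have "lam h - a0 = S * cA (\<kappa> * h) / (cB (\<kappa> * h) * h\<^sup>2)"
      by (simp add: eq_divide_eq mult.assoc)
    moreover have "\<kappa>\<^sup>2 * S * (cA (\<kappa> * h) / ((\<kappa> * h)\<^sup>2 * cB (\<kappa> * h)))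
        = S * cA (\<kappa> * h) / (cB (\<kappa> * h) * h\<^sup>2)"
      using h \<open>\<kappa> > 0\<close> by (simp add: power_mult_distrib)
    ultimately show "\<kappa>\<^sup>2 * S * g (\<kappa> * h)
      = lam h - (a0 + \<kappa>\<^sup>2 * S) - C * (\<kappa>\<^sup>2 * S) * (\<kappa> * h) ^ M"
      unfolding g_def by (simp add: algebra_simps)
  qed
  ultimately show ?thesis
    by (rule landau_o.big.in_cong[THEN iffD1, rotated])
qed

theorem mainTheorem2:
  fixes n p :: nat and a :: "nat \<Rightarrow> real" and \<kappa> :: real and lam :: "real \<Rightarrow> real"
  assumes "n \<ge> 1"
    and "p \<in> {1, 2, 3, 4}"
    and "\<kappa> > 0"
    and "\<And>h. h > 0 \<Longrightarrow>
           (\<Sum>m = 1..n. a m * \<kappa> ^ (2 * m - 2)) * calA p (\<kappa> * h)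
             = (lam h - a 0) * calB p (\<kappa> * h) * h ^ 2"
  shows "(\<lambda>h. lam h - (\<Sum>k = 0..n. a k * \<kappa> ^ (2 * k))
             - (Cconst p * (\<Sum>k = 1..n. a k * \<kappa> ^ (2 * k))) * (\<kappa> * h) ^ (2 * p + 2))
         \<in> O[at_right 0](\<lambda>h. h ^ (2 * p + 4))"
proof -
  define S where "S = (\<Sum>m = 1..n. a m * \<kappa> ^ (2 * m - 2))"
  have "\<kappa> ^ (2 * k) = \<kappa>\<^sup>2 * \<kappa> ^ (2 * k - 2)" if "k \<in> {1..n}" for k
  proof -
    have "2 * k = 2 + (2 * k - 2)" using that by auto
    then show ?thesis by (metis power_add)
  qed
  then have sum_1: "(\<Sum>k = 1..n. a k * \<kappa> ^ (2 * k)) = \<kappa>\<^sup>2 * S"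
    unfolding S_def sum_distrib_left by (intro sum.cong) simp_all
  have sum_0: "(\<Sum>k = 0..n. a k * \<kappa> ^ (2 * k)) = a 0 + \<kappa>\<^sup>2 * S"
    by (subst sum.atLeast_Suc_atMost) (use sum_1 in simp_all)
  show ?thesis
    unfolding sum_0 sum_1
    by (rule eigenvalue_error_from_symbol_expansion[OF symbol_ratio_expansion
          calB_eventually_nonzero assms(3)])
       (use assms calB_0 in \<open>simp_all add: S_def\<close>)
qed

end
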